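(* Consider FedProx, as described in the context, and a round $t$ whose step size satisfies $\gamma_t\le1/\alpha$. Assume that the bounded variance, bounded stochastic gradient norm and $L$-smoothness assumptions hold. Then for every client $i$ and every $k\in\{0,\dots,E\}$, $$\mathbb{E}\|\mathbf{w}^i_{t,k}-\overline{\mathbf{w}}_{t,0}\|^2\le\gamma_t^2E^2G^2.$$
   Context: Setting: there are $C$ clients with weights $p_i\ge0$ satisfying $\sum_ip_i=1$, local objectives $F_i:\mathbb{R}^D\to\mathbb{R}$, and global objective $F=\sum_ip_iF_i$. FedProx with $\alpha>0$, $E\ge1$ local steps and step sizes $\gamma_t$, with all clients participating: in round $t$, $\mathbf{w}^i_{t,0}=\overline{\mathbf{w}}_{t,0}$ and, for $k=0,\dots,E-1$, $$\mathbf{w}^i_{t,k+1}=(1-\alpha\gamma_t)\mathbf{w}^i_{t,k}+\alpha\gamma_t\overline{\mathbf{w}}_{t,0}-\gamma_tg_i(\mathbf{w}^i_{t,k}),$$ with stochastic gradients $g_i$ of $F_i$ sampled independently given the past. Also $\overline{\mathbf{w}}_{t,k}=\sum_ip_i\mathbf{w}^i_{t,k}$ and $\overline{\mathbf{w}}_{t+1,0}=\overline{\mathbf{w}}_{t,E}$. Assumptions: - Unbiasedness: $\mathbb{E}\,g_i(\mathbf{w}^i_{t,k})=\nabla F_i(\mathbf{w}^i_{t,k})$. - Variance: $\mathbb{E}\|g_i(\mathbf{w}^i_{t,k})-\nabla F_i(\mathbf{w}^i_{t,k})\|^2\le\sigma^2$. - Bounded second moment: $\mathbb{E}\|g_i(\mathbf{w}^i_{t,k})\|^2\le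 G^2$ for all $i,t,k$. - Smoothness: each $\nabla F_i$ is $L$-Lipschitz. $\mathbb{E}$ is total expectation. *)

theory Defs
  imports "HOL-Probability.Probability"
begin

definition esq :: "'a measure \<Rightarrow> ('a \<Rightarrow> 'v::real_normed_vector) \<Rightarrow> ennreal" where
  "esq M X = (\<integral>\<^sup>+ \<omega>. ennreal ((norm (X \<omega>))\<^sup>2) \<partial>M)"

end

theory Submission
  imports Defs
begin

text \<open>Since \<open>0 \<le> \<alpha> \<gamma> \<le> 1\<close>, each local step shrinks the drift from the round's starting
  model by the factor \<open>1 - \<alpha> \<gamma>\<close> and then adds \<open>-\<gamma> g\<close>, so after \<open>k\<close> steps its norm is at
  most \<open>\<gamma>\<close> times the sum of the \<open>k\<close> stochastic gradient norms. Cauchy-Schwarz bounds the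
  square by \<open>\<gamma>\<^sup>2 k\<close> times the sum of squares, and the second-moment bound \<open>G\<^sup>2\<close> on each
  summand gives \<open>\<gamma>\<^sup>2 k\<^sup>2 G\<^sup>2 \<le> \<gamma>\<^sup>2 E\<^sup>2 G\<^sup>2\<close>.\<close>

lemma norm_diff_anchor_le_sum_norm:
  fixes x g :: "nat \<Rightarrow> 'v::real_normed_vector"
  assumes "0 \<le> a" "a \<le> 1" "0 \<le> \<gamma>" "x 0 = c"
    and step: "\<And>k. k < n \<Longrightarrow> x (Suc k) = (1 - a) *\<^sub>R x k + a *\<^sub>R c - \<gamma> *\<^sub>R g k"
    and "k \<le> n"
  shows "norm (x k - c) \<le> \<gamma> * (\<Sum>j<k. norm (g j))"
  using \<open>k \<le> n\<close>
proof (induction k)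
  case 0
  then show ?case using \<open>x 0 = c\<close> by simp
next
  case (Suc k)
  have "x (Suc k) - c = (1 - a) *\<^sub>R (x k - c) - \<gamma> *\<^sub>R g k"
    using step[of k] Suc.prems by (simp add: algebra_simps)
  then have "norm (x (Suc k) - c) \<le> (1 - a) * norm (x k - c) + \<gamma> * norm (g k)"
    using assms(1-3) by (metis abs_of_nonneg diff_ge_0_iff_ge norm_scaleR norm_triangle_ineq4)
  also have "\<dots> \<le> norm (x k - c) + \<gamma> * norm (g k)"
    using assms(1,2) by (intro add_right_mono mult_left_le_one_le) auto
  also have "\<dots> \<le> \<gamma> * (\<Sum>j<Suc k. norm (g j))"
    using Suc by (simp add: distrib_left)
  finally show ?case .
qed

lemma norm_diff_anchor_sq_le_sum_sq:
  fixes x g :: "nat \<Rightarrow> 'v::real_normed_vector"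
  assumes "0 \<le> a" "a \<le> 1" "0 \<le> \<gamma>" "x 0 = c"
    and "\<And>k. k < n \<Longrightarrow> x (Suc k) = (1 - a) *\<^sub>R x k + a *\<^sub>R c - \<gamma> *\<^sub>R g k"
    and "k \<le> n"
  shows "(norm (x k - c))\<^sup>2 \<le> \<gamma>\<^sup>2 * real k * (\<Sum>j<k. (norm (g j))\<^sup>2)"
proof -
  have "(norm (x k - c))\<^sup>2 \<le> (\<gamma> * (\<Sum>j<k. norm (g j)))\<^sup>2"
    using norm_diff_anchor_le_sum_norm[OF assms] by (simp add: power_mono)
  also have "\<dots> = \<gamma>\<^sup>2 * (\<Sum>j<k. norm (g j))\<^sup>2"
    by (simp add: power_mult_distrib)
  also have "\<dots> \<le> \<gamma>\<^sup>2 * ((\<Sum>j<k. (norm (g j))\<^sup>2) * real k)"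
    using sum_squared_le_sum_of_squares[of "\<lambda>j. norm (g j)" "{..<k}"]
    by (intro mult_left_mono) auto
  finally show ?thesis by (simp add: mult_ac)
qed

lemma esq_le_cmult_sum_esq:
  fixes X :: "'a \<Rightarrow> 'v::real_normed_vector" and Y :: "'j \<Rightarrow> 'a \<Rightarrow> 'w::real_normed_vector"
  assumes "finite J" "0 \<le> c"
    and "\<And>j. j \<in> J \<Longrightarrow> Y j \<in> borel_measurable M"
    and "\<And>\<omega>. (norm (X \<omega>))\<^sup>2 \<le> c * (\<Sum>j\<in>J. (norm (Y j \<omega>))\<^sup>2)"
  shows "esq M X \<le> ennreal c * (\<Sum>j\<in>J. esq M (Y j))"
proof -
  have meas: "(\<lambda>\<omega>. ennreal ((norm (Y j \<omega>))\<^sup>2)) \<in> borel_measurable M" if "j \<in> J" for j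
    using assms(3)[OF that] by measurable
  have "esq M X \<le> (\<integral>\<^sup>+ \<omega>. ennreal c * (\<Sum>j\<in>J. ennreal ((norm (Y j \<omega>))\<^sup>2)) \<partial>M)"
    unfolding esq_def
  proof (rule nn_integral_mono)
    fix \<omega>
    have "ennreal ((norm (X \<omega>))\<^sup>2) \<le> ennreal (c * (\<Sum>j\<in>J. (norm (Y j \<omega>))\<^sup>2))"
      using assms(4) by (rule ennreal_leI)
    also have "\<dots> = ennreal c * (\<Sum>j\<in>J. ennreal ((norm (Y j \<omega>))\<^sup>2))"
      using \<open>0 \<le> c\<close> by (simp add: ennreal_mult sum_nonneg sum_ennreal)
    finally show "ennreal ((norm (X \<omega>))\<^sup>2) \<le> ennreal c * (\<Sum>j\<in>J. ennreal ((norm (Y j \<omega>))\<^sup>2))" .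
  qed
  also have "\<dots> = ennreal c * (\<integral>\<^sup>+ \<omega>. (\<Sum>j\<in>J. ennreal ((norm (Y j \<omega>))\<^sup>2)) \<partial>M)"
    using meas by (intro nn_integral_cmult borel_measurable_sum) auto
  also have "\<dots> = ennreal c * (\<Sum>j\<in>J. esq M (Y j))"
    unfolding esq_def by (intro arg_cong[where f = "(*) (ennreal c)"] nn_integral_sum meas assms(1))
  finally show ?thesis .
qed

theorem lemma2:
  fixes M :: "'a measure"
    and C E :: nat and p :: "nat \<Rightarrow> real"
    and F :: "nat \<Rightarrow> 'v::euclidean_space \<Rightarrow> real"
    and gradF :: "nat \<Rightarrow> 'v \<Rightarrow> 'v"
    and \<alpha> L \<sigma> G :: real and \<gamma> :: "nat \<Rightarrow> real"
    and wl :: "nat \<Rightarrow> nat \<Rightarrow> nat \<Rightarrow> 'a \<Rightarrow> 'v"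
    and W :: "nat \<Rightarrow> 'a \<Rightarrow> 'v"
    and g :: "nat \<Rightarrow> nat \<Rightarrow> nat \<Rightarrow> 'a \<Rightarrow> 'v"
    and t :: nat
  assumes "prob_space M"
    and "\<And>i. i < C \<Longrightarrow> p i \<ge> 0" and "(\<Sum>i<C. p i) = 1"
    and "\<alpha> > 0" and "E \<ge> 1"
    and "\<And>s. \<gamma> s > 0"
    and "\<gamma> t \<le> 1 / \<alpha>"
    \<comment> \<open>gradients and L-smoothness\<close>
    and "\<And>i x. i < C \<Longrightarrow> (F i has_derivative (\<lambda>h. gradF i x \<bullet> h)) (at x)"
    and "\<And>i x y. i < C \<Longrightarrow> norm (gradF i x - gradF i y) \<le> L * norm (x - y)"
    \<comment> \<open>the random initial global model and the stochastic gradients\<close>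
    and "W 0 \<in> borel_measurable M"
    and "\<And>i s k. i < C \<Longrightarrow> k < E \<Longrightarrow> g i s k \<in> borel_measurable M"
    \<comment> \<open>FedProx dynamics, all clients participating\<close>
    and "\<And>i s \<omega>. i < C \<Longrightarrow> wl i s 0 \<omega> = W s \<omega>"
    and "\<And>i s k \<omega>. i < C \<Longrightarrow> k < E \<Longrightarrow>
           wl i s (Suc k) \<omega> = (1 - \<alpha> * \<gamma> s) *\<^sub>R wl i s k \<omega> + (\<alpha> * \<gamma> s) *\<^sub>R W s \<omega>
                              - \<gamma> s *\<^sub>R g i s k \<omega>"
    and "\<And>s \<omega>. W (Suc s) \<omega> = (\<Sum>i<C. p i *\<^sub>R wl i s E \<omega>)"
    \<comment> \<open>bounded variance and bounded second moment\<close>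
    and "\<And>i s k. i < C \<Longrightarrow> k < E \<Longrightarrow>
           esq M (\<lambda>\<omega>. g i s k \<omega> - gradF i (wl i s k \<omega>)) \<le> ennreal (\<sigma>\<^sup>2)"
    and "\<And>i s k. i < C \<Longrightarrow> k < E \<Longrightarrow> esq M (g i s k) \<le> ennreal (G\<^sup>2)"
  shows "\<forall>i<C. \<forall>k\<le>E.
           esq M (\<lambda>\<omega>. wl i t k \<omega> - W t \<omega>) \<le> ennreal ((\<gamma> t)\<^sup>2 * (real E)\<^sup>2 * G\<^sup>2)"
proof (intro allI impI)
  fix i k assume "i < C" "k \<le> E"
  have "0 \<le> \<alpha> * \<gamma> t" "\<alpha> * \<gamma> t \<le> 1" "0 \<le> \<gamma> t"
    using assms(4,6,7) by (auto simp: less_imp_le field_simps)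
  then have "(norm (wl i t k \<omega> - W t \<omega>))\<^sup>2 \<le> (\<gamma> t)\<^sup>2 * real k * (\<Sum>j<k. (norm (g i t j \<omega>))\<^sup>2)"
    for \<omega>
    using assms(12,13) \<open>i < C\<close> \<open>k \<le> E\<close>
    by (intro norm_diff_anchor_sq_le_sum_sq[where x = "\<lambda>k. wl i t k \<omega>" and n = E]) auto
  then have "esq M (\<lambda>\<omega>. wl i t k \<omega> - W t \<omega>) \<le> ennreal ((\<gamma> t)\<^sup>2 * real k) * (\<Sum>j<k. esq M (g i t j))"
    using assms(11) \<open>i < C\<close> \<open>k \<le> E\<close> by (intro esq_le_cmult_sum_esq) auto
  also have "\<dots> \<le> ennreal ((\<gamma> t)\<^sup>2 * real k) * (\<Sum>j<k. ennreal (G\<^sup>2))"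
    using assms(16) \<open>i < C\<close> \<open>k \<le> E\<close> by (intro mult_left_mono sum_mono) auto
  also have "\<dots> = ennreal ((\<gamma> t)\<^sup>2 * (real k)\<^sup>2 * G\<^sup>2)"
  proof -
    have "(\<Sum>j<k. ennreal (G\<^sup>2)) = ennreal (real k * G\<^sup>2)"
      by (simp add: ennreal_mult ennreal_of_nat_eq_real_of_nat)
    moreover have "ennreal ((\<gamma> t)\<^sup>2 * real k) * ennreal (real k * G\<^sup>2)
        = ennreal ((\<gamma> t)\<^sup>2 * real k * (real k * G\<^sup>2))"
      by (rule ennreal_mult[symmetric]) auto
    ultimately show ?thesis by (simp add: power2_eq_square mult_ac)
  qed
  also have "\<dots> \<le> ennreal ((\<gamma> t)\<^sup>2 * (real E)\<^sup>2 * G\<^sup>2)"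
    using \<open>k \<le> E\<close> by (intro ennreal_leI mult_right_mono mult_left_mono power_mono) auto
  finally show "esq M (\<lambda>\<omega>. wl i t k \<omega> - W t \<omega>) \<le> ennreal ((\<gamma> t)\<^sup>2 * (real E)\<^sup>2 * G\<^sup>2)" .
qed

end
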